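(* Let $N$ be a Poisson process on $[0,\infty)$ with intensity $\lambda>0$, with points $0<X_1<X_2<\cdots$, and let $\epsilon>0$. For every $i\ge1$ and every $s\ge 0$, $$\mathbb{E}\left[e^{-sB_i}\right]=\frac{\lambda+s}{\lambda+s\,e^{(\lambda+s)\epsilon}}.$$
   Context: A cluster is a maximal set of consecutive points $X_j,\dots,X_k$ with $X_{l+1}-X_l\le\epsilon$ for $j\le l<k$. Clusters are numbered from left to right; $A_i$ denotes the first point of the $i$-th cluster and $E_i=X_k+\epsilon$, where $X_k$ is the last point of the $i$-th cluster. The length of the $i$-th cluster is $B_i=E_i-A_i$. *)

theory Defs
  imports "HOL-Probability.Probability" "HOL-Library.Infinite_Set"
begin

text \<open>Points of the process are X 0 < X 1 < ... (X 0 is the paper's X_1).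
  Index j starts a cluster iff j = 0 or the gap X j - X (j-1) exceeds eps.\<close>

definition cluster_starts :: "(nat \<Rightarrow> real) \<Rightarrow> real \<Rightarrow> nat set" where
  "cluster_starts X eps = {j. j = 0 \<or> X j - X (j - 1) > eps}"

definition cluster_A :: "(nat \<Rightarrow> real) \<Rightarrow> real \<Rightarrow> nat \<Rightarrow> real" where
  "cluster_A X eps i = X (enumerate (cluster_starts X eps) (i - 1))"

text \<open>E_i = (last point of the i-th cluster) + eps; the last point is the one
  just before the first point of cluster i+1.\<close>
definition cluster_E :: "(nat \<Rightarrow> real) \<Rightarrow> real \<Rightarrow> nat \<Rightarrow> real" where
  "cluster_E X eps i = X (enumerate (cluster_starts X eps) i - 1) + eps"

definition cluster_length :: "(nat \<Rightarrow> real) \<Rightarrow> real \<Rightarrow> nat \<Rightarrow> real" where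
  "cluster_length X eps i = cluster_E X eps i - cluster_A X eps i"

text \<open>Poisson process on [0,\<infinity>) with intensity l: points are partial sums of
  i.i.d. Exp(l) interarrival times T 0, T 1, ...\<close>
definition poisson_points :: "(nat \<Rightarrow> 'a \<Rightarrow> real) \<Rightarrow> 'a \<Rightarrow> nat \<Rightarrow> real" where
  "poisson_points T \<omega> n = (\<Sum>k\<le>n. T k \<omega>)"

end

theory Submission
  imports Defs
begin

text \<open>Write the points as partial sums of the i.i.d. \<open>Exp(l)\<close> gaps \<open>T 0, T 1, \<dots>\<close>; index \<open>j\<close>
  starts a cluster iff \<open>j = 0\<close> or \<open>T j > eps\<close>. If a cluster starts at index \<open>a\<close> and has the
  \<open>m + 1\<close> points \<open>a, \<dots>, a + m\<close>, its length is \<open>eps + T (a+1) + \<dots> + T (a+m)\<close>, the gaps inside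
  it are \<open>\<le> eps\<close> and \<open>T (a+m+1) > eps\<close>. The event that the cluster starts at \<open>a\<close> depends only
  on \<open>T 0, \<dots>, T a\<close>, so by independence the contribution of \<open>(a, m)\<close> to \<open>E[exp (-s B)]\<close>
  factorises as \<open>P(start at a) q^m exp (-s eps) exp (-l eps)\<close> with \<open>q = E[exp (-s T); T \<le> eps]\<close>.
  Summing the geometric series in \<open>m\<close> and then over \<open>a\<close> gives the probability that the previous
  cluster exists times the claimed value; at \<open>s = 0\<close> that value is \<open>1\<close>, which shows inductively
  that almost surely every cluster exists.\<close>

lemma enumerate_eq_if_card_less:
  fixes S :: "nat set"
  assumes "a \<in> S" and "card (S \<inter> {..<a}) = n"
  shows "enumerate S n = a"
  using assms
proof (induction n arbitrary: S a)
  case 0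
  then have "\<And>y. y \<in> S \<Longrightarrow> a \<le> y" by (auto simp: not_less[symmetric])
  with 0 show ?case unfolding enumerate_0 by (intro Least_equality) auto
next
  case (Suc n)
  define L where "L = enumerate S 0"
  have L: "L \<in> S" "L \<le> a" unfolding L_def enumerate_0 using Suc.prems(1)
    by (auto intro: LeastI Least_le)
  have "S \<inter> {..<a} \<noteq> {}" using Suc.prems(2) by auto
  then have "L < a" unfolding L_def enumerate_0 by (auto intro: le_less_trans[OF Least_le])
  have "(S - {L}) \<inter> {..<a} = (S \<inter> {..<a}) - {L}" by blast
  with L \<open>L < a\<close> have "card ((S - {L}) \<inter> {..<a}) = n"
    using Suc.prems(2) by (simp add: card_Diff_singleton)
  moreover have "a \<in> S - {L}" using Suc.prems(1) \<open>L < a\<close> by simp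
  ultimately show ?case by (simp add: enumerate_Suc' L_def[symmetric] Suc.IH)
qed

lemma suminf_suminf_if_unique:
  fixes c :: ennreal
  assumes "\<And>a m a' m'. P a m \<Longrightarrow> P a' m' \<Longrightarrow> a = a' \<and> m = m'"
  shows "(\<Sum>a. \<Sum>m. if P a m then c else 0) = (if \<exists>a m. P a m then c else 0)"
proof (cases "\<exists>a m. P a m")
  case True
  then obtain a0 m0 where "P a0 m0" by blast
  with assms have "P a m \<longleftrightarrow> a = a0 \<and> m = m0" for a m by blast
  then have "(\<lambda>a. \<Sum>m. if P a m then c else 0) = (\<lambda>a. if a = a0 then c else 0)"
    using sums_single[of _ "\<lambda>_. c"] by (auto simp: fun_eq_iff sums_iff)
  then show ?thesis using True sums_single[of _ "\<lambda>_. c"] by (simp add: sums_iff)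
next
  case False
  then show ?thesis by simp
qed

section \<open>Clusters of partial sums\<close>

lemma cluster_starts_partial_sums:
  "cluster_starts (\<lambda>k. \<Sum>j\<le>k. t j) eps = {j. j = 0 \<or> eps < t j}"
  unfolding cluster_starts_def
proof (rule Collect_cong)
  fix j
  show "(j = 0 \<or> eps < (\<Sum>k\<le>j. t k) - (\<Sum>k\<le>j - 1. t k)) \<longleftrightarrow> (j = 0 \<or> eps < t j)"
    by (cases j) simp_all
qed

text \<open>Clusters are counted from \<open>0\<close> here: \<open>cluster_start t eps n a\<close> says that index \<open>a\<close> begins
  cluster \<open>n + 1\<close> of the points \<open>\<Sum>j\<le>k. t j\<close>, and \<open>cluster_span t eps n a m\<close> that this
  cluster consists of the indices \<open>a, \<dots>, a + m\<close>.\<close>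

definition cluster_start :: "(nat \<Rightarrow> real) \<Rightarrow> real \<Rightarrow> nat \<Rightarrow> nat \<Rightarrow> bool" where
  "cluster_start t eps n a \<longleftrightarrow>
     (a = 0 \<or> eps < t a) \<and> card {j\<in>{..<a}. j = 0 \<or> eps < t j} = n"

definition cluster_span :: "(nat \<Rightarrow> real) \<Rightarrow> real \<Rightarrow> nat \<Rightarrow> nat \<Rightarrow> nat \<Rightarrow> bool" where
  "cluster_span t eps n a m \<longleftrightarrow>
     cluster_start t eps n a \<and> (\<forall>k\<in>{a<..a + m}. t k \<le> eps) \<and> eps < t (Suc (a + m))"

lemma cluster_start_0: "cluster_start t eps 0 0"
  by (simp add: cluster_start_def)

lemma enumerate_cluster_start:
  assumes "cluster_start t eps n a"
  shows "enumerate {j. j = 0 \<or> eps < t j} n = a"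
proof (rule enumerate_eq_if_card_less)
  have "{j. j = 0 \<or> eps < t j} \<inter> {..<a} = {j\<in>{..<a}. j = 0 \<or> eps < t j}" by auto
  then show "card ({j. j = 0 \<or> eps < t j} \<inter> {..<a}) = n"
    using assms by (simp add: cluster_start_def)
qed (use assms in \<open>simp add: cluster_start_def\<close>)

lemma cluster_start_unique: "cluster_start t eps n a \<Longrightarrow> cluster_start t eps n b \<Longrightarrow> a = b"
  by (metis enumerate_cluster_start)

lemma cluster_start_restrict:
  "cluster_start (restrict t {..a}) eps n a \<longleftrightarrow> cluster_start t eps n a"
proof -
  have "{j\<in>{..<a}. j = 0 \<or> eps < restrict t {..a} j} = {j\<in>{..<a}. j = 0 \<or> eps < t j}" by auto
  then show ?thesis by (simp add: cluster_start_def)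
qed

lemma cluster_span_imp_cluster_start_Suc:
  assumes "cluster_span t eps n a m"
  shows "cluster_start t eps (Suc n) (Suc (a + m))"
proof -
  have start: "a = 0 \<or> eps < t a" and short: "\<And>k. a < k \<Longrightarrow> k \<le> a + m \<Longrightarrow> t k \<le> eps"
    using assms by (auto simp: cluster_span_def cluster_start_def)
  have "{j\<in>{..<Suc (a + m)}. j = 0 \<or> eps < t j} = insert a {j\<in>{..<a}. j = 0 \<or> eps < t j}"
  proof (rule set_eqI)
    fix k
    show "k \<in> {j\<in>{..<Suc (a + m)}. j = 0 \<or> eps < t j} \<longleftrightarrow> k \<in> insert a {j\<in>{..<a}. j = 0 \<or> eps < t j}"
      using start short[of k] by (cases k a rule: linorder_cases) auto
  qed
  then show ?thesis using assms by (simp add: cluster_span_def cluster_start_def)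
qed

lemma cluster_start_SucE:
  assumes "cluster_start t eps (Suc n) b"
  obtains a m where "cluster_span t eps n a m" and "b = Suc (a + m)"
proof -
  let ?C = "{j\<in>{..<b}. j = 0 \<or> eps < t j}"
  have "card ?C = Suc n" using assms by (simp add: cluster_start_def)
  then have "?C \<noteq> {}" by (metis card.empty Zero_not_Suc)
  define a where "a = Max ?C"
  have a: "a \<in> ?C" unfolding a_def using \<open>?C \<noteq> {}\<close> by (intro Max_in) simp_all
  have a_max: "\<And>k. k \<in> ?C \<Longrightarrow> k \<le> a" unfolding a_def by (intro Max_ge) simp_all
  have "?C = insert a {j\<in>{..<a}. j = 0 \<or> eps < t j}"
    using a a_max by (auto simp: le_less)
  with a \<open>card ?C = Suc n\<close> have "cluster_start t eps n a"
    by (simp add: cluster_start_def)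
  moreover define m where "m = b - Suc a"
  moreover have "b = Suc (a + m)" using a by (simp add: m_def)
  moreover have "t k \<le> eps" if k: "k \<in> {a<..a + m}" for k
  proof -
    have "k \<notin> ?C" using a_max[of k] k by auto
    moreover have "k < b" "k \<noteq> 0" using k \<open>b = Suc (a + m)\<close> by auto
    ultimately show ?thesis by auto
  qed
  moreover have "eps < t (Suc (a + m))"
    using assms \<open>b = Suc (a + m)\<close> by (simp add: cluster_start_def)
  ultimately show ?thesis by (intro that) (auto simp: cluster_span_def)
qed

lemma ex_cluster_start_Suc_iff:
  "(\<exists>b. cluster_start t eps (Suc n) b) \<longleftrightarrow> (\<exists>a m. cluster_span t eps n a m)"
proof
  assume "\<exists>b. cluster_start t eps (Suc n) b"
  then obtain b where "cluster_start t eps (Suc n) b" ..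
  then obtain a m where "cluster_span t eps n a m" by (rule cluster_start_SucE)
  then show "\<exists>a m. cluster_span t eps n a m" by blast
qed (auto dest: cluster_span_imp_cluster_start_Suc)

lemma cluster_span_unique:
  assumes "cluster_span t eps n a m" and "cluster_span t eps n a' m'"
  shows "a = a' \<and> m = m'"
proof -
  have "a = a'" using assms unfolding cluster_span_def by (blast intro: cluster_start_unique)
  moreover have "Suc (a + m) = Suc (a' + m')"
    using assms[THEN cluster_span_imp_cluster_start_Suc] by (rule cluster_start_unique)
  ultimately show ?thesis by simp
qed

lemma cluster_length_partial_sums:
  assumes "cluster_span t eps n a m"
  shows "cluster_length (\<lambda>k. \<Sum>j\<le>k. t j) eps (Suc n) = eps + (\<Sum>k\<in>{a<..a + m}. t k)"
proof -
  have "enumerate {j. j = 0 \<or> eps < t j} n = a"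
    using assms by (simp add: cluster_span_def enumerate_cluster_start)
  moreover have "enumerate {j. j = 0 \<or> eps < t j} (Suc n) = Suc (a + m)"
    using assms by (intro enumerate_cluster_start cluster_span_imp_cluster_start_Suc)
  moreover have "(\<Sum>j\<le>a + m. t j) = (\<Sum>j\<in>{..a} \<union> {a<..a + m}. t j)"
    by (rule sum.cong) auto
  then have "(\<Sum>j\<le>a + m. t j) = (\<Sum>j\<le>a. t j) + (\<Sum>k\<in>{a<..a + m}. t k)"
    by (simp add: sum.union_disjoint ivl_disj_int)
  ultimately show ?thesis
    by (simp add: cluster_length_def cluster_E_def cluster_A_def cluster_starts_partial_sums)
qed

lemma cluster_span_weight_eq_prod:
  "(if cluster_span t eps n a m then exp (- s * (eps + (\<Sum>k\<in>{a<..a + m}. t k))) else 0) =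
     (if cluster_start t eps n a then 1 else 0) *
     (\<Prod>k\<in>{a<..a + m}. if t k \<le> eps then exp (- s * t k) else 0) *
     (if eps < t (Suc (a + m)) then exp (- s * eps) else 0)"
proof (cases "\<forall>k\<in>{a<..a + m}. t k \<le> eps")
  case True
  then have "(\<Prod>k\<in>{a<..a + m}. if t k \<le> eps then exp (- s * t k) else 0) =
      exp (- s * (\<Sum>k\<in>{a<..a + m}. t k))"
    by (simp add: exp_sum sum_distrib_left)
  moreover have "exp (- s * (eps + (\<Sum>k\<in>{a<..a + m}. t k))) =
      exp (- s * eps) * exp (- s * (\<Sum>k\<in>{a<..a + m}. t k))"
    by (simp only: distrib_left exp_add)
  ultimately show ?thesis using True by (simp add: cluster_span_def)
next
  case False
  then have "(\<Prod>k\<in>{a<..a + m}. if t k \<le> eps then exp (- s * t k) else 0) = 0"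
    by (intro prod_zero) auto
  moreover have "\<not> cluster_span t eps n a m" using False by (simp add: cluster_span_def)
  ultimately show ?thesis by (simp only: if_False mult_zero_left mult_zero_right)
qed

lemma suminf_cluster_span_weight:
  "(\<Sum>a. \<Sum>m. ennreal (if cluster_span t eps n a m then exp (- s * (eps + (\<Sum>k\<in>{a<..a + m}. t k))) else 0)) =
     (if \<exists>b. cluster_start t eps (Suc n) b
      then ennreal (exp (- s * cluster_length (\<lambda>k. \<Sum>j\<le>k. t j) eps (Suc n))) else 0)"
proof -
  have "ennreal (if cluster_span t eps n a m then exp (- s * (eps + (\<Sum>k\<in>{a<..a + m}. t k))) else 0) =
      (if cluster_span t eps n a m
       then ennreal (exp (- s * cluster_length (\<lambda>k. \<Sum>j\<le>k. t j) eps (Suc n))) else 0)" for a m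
    by (simp add: cluster_length_partial_sums)
  then show ?thesis
    by (simp add: suminf_suminf_if_unique[OF cluster_span_unique] ex_cluster_start_Suc_iff)
qed

section \<open>Measurability and independence\<close>

lemma pred_card_Collect_lessThan:
  fixes a :: nat
  assumes "\<And>j. j < a \<Longrightarrow> Measurable.pred N (P j)"
  shows "Measurable.pred N (\<lambda>x. card {j\<in>{..<a}. P j x} = n)"
  using assms
proof (induction a arbitrary: n)
  case 0
  then show ?case by simp
next
  case (Suc a)
  have "card {j\<in>{..<Suc a}. P j x} = card {j\<in>{..<a}. P j x} + (if P a x then 1 else 0)" for x
  proof -
    have "{j\<in>{..<Suc a}. P j x} = (if P a x then insert a {j\<in>{..<a}. P j x} else {j\<in>{..<a}. P j x})"
      by (auto simp: less_Suc_eq)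
    then show ?thesis by simp
  qed
  then have "(\<lambda>x. card {j\<in>{..<Suc a}. P j x} = n) =
      (\<lambda>x. (P a x \<and> 1 \<le> n \<and> card {j\<in>{..<a}. P j x} = n - 1) \<or> (\<not> P a x \<and> card {j\<in>{..<a}. P j x} = n))"
    by (auto simp: fun_eq_iff)
  then show ?case using Suc by simp
qed

lemma measurable_enumerate_Collect:
  fixes Q :: "nat \<Rightarrow> 'a \<Rightarrow> bool"
  assumes "\<And>k. Measurable.pred M (Q k)"
  shows "(\<lambda>x. enumerate {k. Q k x} n) \<in> measurable M (count_space UNIV)"
  using assms
proof (induction n arbitrary: Q)
  case 0
  then show ?case unfolding enumerate_0 mem_Collect_eq by (rule measurable_Least[where P = Q])
next
  case (Suc n)
  note [measurable] = Suc.prems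
  define L where "L x = (LEAST k. Q k x)" for x
  have [measurable]: "L \<in> measurable M (count_space UNIV)"
    unfolding L_def by (intro measurable_Least) simp
  have "{k. Q k x} - {enumerate {k. Q k x} 0} = {k. Q k x \<and> k \<noteq> L x}" for x
    by (auto simp: enumerate_0 L_def)
  moreover have "(\<lambda>x. enumerate {k. Q k x \<and> k \<noteq> L x} n) \<in> measurable M (count_space UNIV)"
    by (intro Suc.IH) measurable
  ultimately show ?case by (simp add: enumerate_Suc')
qed

lemma pred_cluster_start_PiM:
  "Measurable.pred (PiM {..a} (\<lambda>_. borel)) (\<lambda>t. cluster_start t eps n a)"
proof -
  have [measurable]: "Measurable.pred (PiM {..a} (\<lambda>_. borel)) (\<lambda>t. card {j\<in>{..<a}. j = 0 \<or> eps < t j} = n)"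
  proof (rule pred_card_Collect_lessThan)
    fix j :: nat
    assume "j < a"
    then have "j \<in> {..a}" by simp
    then show "Measurable.pred (PiM {..a} (\<lambda>_. borel)) (\<lambda>t. j = 0 \<or> eps < t j)" by measurable
  qed
  show ?thesis unfolding cluster_start_def by measurable
qed

lemma (in prob_space) nn_integral_indep_block_prod:
  fixes X :: "'i \<Rightarrow> 'a \<Rightarrow> real"
    and f :: "('i \<Rightarrow> real) \<Rightarrow> ennreal" and g :: "'i \<Rightarrow> real \<Rightarrow> ennreal"
  assumes indep: "indep_vars (\<lambda>_. borel) X UNIV"
    and f: "f \<in> borel_measurable (PiM B (\<lambda>_. borel))"
    and g: "\<And>j. j \<in> J \<Longrightarrow> g j \<in> borel_measurable borel"
    and "finite J" and "B \<inter> J = {}"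
  shows "(\<integral>\<^sup>+\<omega>. f (restrict (\<lambda>i. X i \<omega>) B) * (\<Prod>j\<in>J. g j (X j \<omega>)) \<partial>M) =
    (\<integral>\<^sup>+\<omega>. f (restrict (\<lambda>i. X i \<omega>) B) \<partial>M) * (\<Prod>j\<in>J. \<integral>\<^sup>+\<omega>. g j (X j \<omega>) \<partial>M)"
proof -
  \<comment> \<open>The block \<open>B\<close> and the single indices in \<open>J\<close> become one independent family indexed by
    \<open>insert None (Some ` J)\<close>.\<close>
  define L where "L = insert None (Some ` J)"
  define K where "K = case_option B (\<lambda>j. {j})"
  define Y where "Y = case_option f (\<lambda>j x. g j (x j))"
  define Z where "Z = (\<lambda>k \<omega>. Y k (restrict (\<lambda>i. X i \<omega>) (K k)))"
  have "indep_vars (\<lambda>k. PiM (K k) (\<lambda>_. borel)) (\<lambda>k \<omega>. restrict (\<lambda>i. X i \<omega>) (K k)) L"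
    using \<open>B \<inter> J = {}\<close>
    by (intro indep_vars_restrict[OF indep]) (auto simp: disjoint_family_on_def K_def L_def)
  moreover have "Y k \<in> borel_measurable (PiM (K k) (\<lambda>_. borel))" if "k \<in> L" for k
    using that f g by (auto simp: Y_def K_def L_def)
  ultimately have "indep_vars (\<lambda>_. borel) Z L"
    unfolding Z_def by (rule indep_vars_compose2)
  then have "(\<integral>\<^sup>+\<omega>. (\<Prod>k\<in>L. Z k \<omega>) \<partial>M) = (\<Prod>k\<in>L. \<integral>\<^sup>+\<omega>. Z k \<omega> \<partial>M)"
    using \<open>finite J\<close> by (intro indep_vars_nn_integral) (auto simp: L_def)
  moreover have "(\<Prod>k\<in>L. h k) = h None * (\<Prod>j\<in>J. h (Some j))" for h :: "'i option \<Rightarrow> ennreal"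
    using \<open>finite J\<close> by (simp add: L_def prod.reindex)
  ultimately show ?thesis by (simp add: Z_def Y_def K_def)
qed

section \<open>Independent exponential gaps\<close>

text \<open>\<open>short_gap_laplace l eps s = E[exp (-s T); T \<le> eps]\<close> for \<open>T\<close> exponential with rate \<open>l\<close>.\<close>

definition short_gap_laplace :: "real \<Rightarrow> real \<Rightarrow> real \<Rightarrow> real" where
  "short_gap_laplace l eps s = l / (l + s) * (1 - exp (- ((l + s) * eps)))"

lemma short_gap_laplace_bounds:
  assumes "0 < l" and "0 \<le> eps" and "0 \<le> s"
  shows "0 \<le> short_gap_laplace l eps s" and "short_gap_laplace l eps s < 1"
proof -
  define c where "c = l / (l + s)"
  define e where "e = exp (- ((l + s) * eps))"
  have c: "0 \<le> c" "c \<le> 1" using assms by (auto simp: c_def)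
  have e: "0 < e" "e \<le> 1" using assms by (auto simp: e_def)
  have "short_gap_laplace l eps s = c * (1 - e)" by (simp add: short_gap_laplace_def c_def e_def)
  moreover have "0 \<le> c * (1 - e)" using c e by simp
  moreover have "c * (1 - e) \<le> 1 - e" using c e by (intro mult_left_le_one_le) auto
  ultimately show "0 \<le> short_gap_laplace l eps s" "short_gap_laplace l eps s < 1"
    using e by auto
qed

lemma short_gap_laplace_geometric_sum:
  assumes "0 < l" and "0 \<le> eps" and "0 \<le> s"
  shows "(\<Sum>m. short_gap_laplace l eps s ^ m * (exp (- s * eps) * exp (- eps * l))) =
    (l + s) / (l + s * exp ((l + s) * eps))"
proof -
  define q where "q = short_gap_laplace l eps s"
  define E where "E = exp ((l + s) * eps)"
  have "0 < E" "0 < l + s" "0 < l + s * E" using assms by (auto simp: E_def add_pos_nonneg)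
  have E_inv: "exp (- ((l + s) * eps)) = 1 / E" by (simp add: E_def exp_minus inverse_eq_divide)
  have "\<bar>q\<bar> < 1" using short_gap_laplace_bounds[OF assms] by (simp add: q_def)
  then have "(\<Sum>m. q ^ m * c) = c / (1 - q)" for c
    by (simp add: suminf_mult2[symmetric] summable_geometric suminf_geometric)
  moreover have "exp (- s * eps) * exp (- eps * l) = 1 / E"
    by (simp add: E_inv[symmetric] mult_exp_exp algebra_simps)
  moreover have "1 - q = (l + s * E) / ((l + s) * E)"
    using \<open>0 < E\<close> \<open>0 < l + s\<close> mult_pos_pos[OF \<open>0 < E\<close> \<open>0 < l + s\<close>]
    unfolding q_def short_gap_laplace_def E_inv by (simp add: field_simps)
  moreover have "1 / E / ((l + s * E) / ((l + s) * E)) = (l + s) / (l + s * E)"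
    using \<open>0 < E\<close> \<open>0 < l + s\<close> \<open>0 < l + s * E\<close> by (simp add: divide_simps)
  ultimately show ?thesis by (simp only: q_def[symmetric] E_def[symmetric])
qed

locale exponential_gaps = prob_space M for M :: "'a measure" +
  fixes T :: "nat \<Rightarrow> 'a \<Rightarrow> real" and l eps :: real
  assumes l_pos: "0 < l" and eps_pos: "0 < eps"
    and indep: "indep_vars (\<lambda>_. borel) T UNIV"
    and exponential: "\<And>n. distributed M lborel (T n) (exponential_density l)"
begin

lemma measurable_gap[measurable]: "T n \<in> borel_measurable M"
  using distributed_measurable[OF exponential[of n]] by simp

lemma poisson_points_eq: "poisson_points T \<omega> = (\<lambda>k. \<Sum>j\<le>k. T j \<omega>)"
  by (simp add: fun_eq_iff poisson_points_def)

lemma pred_cluster_start[measurable]: "Measurable.pred M (\<lambda>\<omega>. cluster_start (\<lambda>j. T j \<omega>) eps n a)"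
proof -
  have "(\<lambda>\<omega>. restrict (\<lambda>j. T j \<omega>) {..a}) \<in> measurable M (PiM {..a} (\<lambda>_. borel))"
    by (intro measurable_restrict) simp
  from measurable_compose[OF this pred_cluster_start_PiM] show ?thesis
    by (simp add: cluster_start_restrict)
qed

lemma pred_cluster_span[measurable]: "Measurable.pred M (\<lambda>\<omega>. cluster_span (\<lambda>j. T j \<omega>) eps n a m)"
  unfolding cluster_span_def by measurable

lemma measurable_cluster_length[measurable]:
  "(\<lambda>\<omega>. cluster_length (poisson_points T \<omega>) eps i) \<in> borel_measurable M"
proof -
  define N where "N k \<omega> = enumerate {j. j = 0 \<or> eps < T j \<omega>} k" for k \<omega>
  have N: "N k \<in> measurable M (count_space UNIV)" for k
    unfolding N_def by (rule measurable_enumerate_Collect) simp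
  have [measurable]: "(\<lambda>\<omega>. poisson_points T \<omega> k) \<in> borel_measurable M" for k
    unfolding poisson_points_def by measurable
  have "(\<lambda>\<omega>. poisson_points T \<omega> (N i \<omega> - 1)) \<in> borel_measurable M"
    by (rule measurable_compose_countable[where f = "\<lambda>k \<omega>. poisson_points T \<omega> (k - 1)", OF _ N]) simp
  moreover have "(\<lambda>\<omega>. poisson_points T \<omega> (N (i - 1) \<omega>)) \<in> borel_measurable M"
    by (rule measurable_compose_countable[where f = "\<lambda>k \<omega>. poisson_points T \<omega> k", OF _ N]) simp
  ultimately show ?thesis
    by (simp add: cluster_length_def cluster_E_def cluster_A_def poisson_points_eq
        cluster_starts_partial_sums N_def[symmetric])
qed

definition cluster_event :: "nat \<Rightarrow> 'a set" where
  "cluster_event n = {\<omega>\<in>space M. \<exists>a. cluster_start (\<lambda>j. T j \<omega>) eps n a}"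

lemma sets_cluster_event[measurable]: "cluster_event n \<in> sets M"
  unfolding cluster_event_def by measurable

lemma emeasure_cluster_event_suminf:
  "emeasure M (cluster_event n) = (\<Sum>a. emeasure M {\<omega>\<in>space M. cluster_start (\<lambda>j. T j \<omega>) eps n a})"
proof -
  have "cluster_event n = (\<Union>a. {\<omega>\<in>space M. cluster_start (\<lambda>j. T j \<omega>) eps n a})"
    by (auto simp: cluster_event_def)
  moreover have "disjoint_family (\<lambda>a. {\<omega>\<in>space M. cluster_start (\<lambda>j. T j \<omega>) eps n a})"
    by (auto simp: disjoint_family_on_def dest: cluster_start_unique)
  ultimately show ?thesis by (simp add: suminf_emeasure image_subset_iff)
qed

lemma nn_integral_short_gap:
  assumes "0 \<le> s"
  shows "(\<integral>\<^sup>+\<omega>. ennreal (if T j \<omega> \<le> eps then exp (- s * T j \<omega>) else 0) \<partial>M) =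
    ennreal (short_gap_laplace l eps s)"
proof -
  let ?g = "\<lambda>x. ennreal (if x \<le> eps then exp (- s * x) else 0)"
  have "(\<integral>\<^sup>+\<omega>. ?g (T j \<omega>) \<partial>M) = (\<integral>\<^sup>+x. ennreal (exponential_density l x) * ?g x \<partial>lborel)"
    by (rule distributed_nn_integral[OF exponential, symmetric]) simp
  also have "\<dots> = (\<integral>\<^sup>+x. ennreal (l * exp (- ((l + s) * x))) * indicator {0..eps} x \<partial>lborel)"
  proof (rule nn_integral_cong)
    fix x :: real
    have "exp (- x * l) * exp (- s * x) = exp (- ((l + s) * x))"
      by (simp add: mult_exp_exp algebra_simps)
    then show "ennreal (exponential_density l x) * ?g x =
        ennreal (l * exp (- ((l + s) * x))) * indicator {0..eps} x"
      using l_pos by (auto simp: exponential_density_def indicator_def ennreal_mult[symmetric] mult.assoc)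
  qed
  also have "\<dots> = ennreal (short_gap_laplace l eps s)"
  proof (rule nn_integral_has_integral_lebesgue')
    show "\<And>x. x \<in> {0..eps} \<Longrightarrow> 0 \<le> l * exp (- ((l + s) * x))" using l_pos by simp
    define F where "F x = - l / (l + s) * exp (- ((l + s) * x))" for x
    have "((\<lambda>x. l * exp (- ((l + s) * x))) has_integral (F eps - F 0)) {0..eps}"
    proof (rule fundamental_theorem_of_calculus)
      fix x :: real
      have "(F has_real_derivative (- l / (l + s) * (exp (- ((l + s) * x)) * (- (l + s))))) (at x within {0..eps})"
        unfolding F_def by (intro derivative_eq_intros) auto
      moreover have "- l / (l + s) * (exp (- ((l + s) * x)) * (- (l + s))) = l * exp (- ((l + s) * x))"
        using l_pos assms by (simp add: field_simps)
      ultimately show "(F has_vector_derivative l * exp (- ((l + s) * x))) (at x within {0..eps})"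
        by (simp add: has_real_derivative_iff_has_vector_derivative)
    qed (use eps_pos in simp)
    moreover have "F eps - F 0 = short_gap_laplace l eps s"
      by (simp add: F_def short_gap_laplace_def right_diff_distrib)
    ultimately show "((\<lambda>x. l * exp (- ((l + s) * x))) has_integral short_gap_laplace l eps s) {0..eps}"
      by simp
  qed
  finally show ?thesis .
qed

lemma nn_integral_long_gap:
  assumes "0 \<le> c"
  shows "(\<integral>\<^sup>+\<omega>. ennreal (if eps < T j \<omega> then c else 0) \<partial>M) = ennreal (c * exp (- eps * l))"
proof -
  have "(\<integral>\<^sup>+\<omega>. ennreal (if eps < T j \<omega> then c else 0) \<partial>M) =
      (\<integral>\<^sup>+\<omega>. ennreal c * indicator {\<omega>\<in>space M. eps < T j \<omega>} \<omega> \<partial>M)"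
    by (rule nn_integral_cong) (simp add: indicator_def)
  also have "\<dots> = ennreal c * emeasure M {\<omega>\<in>space M. eps < T j \<omega>}"
    by (rule nn_integral_cmult_indicator) measurable
  also have "emeasure M {\<omega>\<in>space M. eps < T j \<omega>} = ennreal (exp (- eps * l))"
    using exponential_distributedD_gt[OF exponential _ l_pos, of eps j] eps_pos
    by (simp add: emeasure_eq_measure)
  finally show ?thesis using assms by (simp add: ennreal_mult)
qed


lemma nn_integral_cluster_span:
  assumes "0 \<le> s"
  shows "(\<integral>\<^sup>+\<omega>. ennreal (if cluster_span (\<lambda>j. T j \<omega>) eps n a m
                   then exp (- s * (eps + (\<Sum>k\<in>{a<..a + m}. T k \<omega>))) else 0) \<partial>M) =
    emeasure M {\<omega>\<in>space M. cluster_start (\<lambda>j. T j \<omega>) eps n a} *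
    ennreal (short_gap_laplace l eps s ^ m * (exp (- s * eps) * exp (- eps * l)))"
proof -
  define f where "f t = ennreal (if cluster_start t eps n a then 1 else 0)" for t
  define short where "short x = ennreal (if x \<le> eps then exp (- s * x) else 0)" for x
  define long where "long x = ennreal (if eps < x then exp (- s * eps) else 0)" for x
  define g where "g j = (if j = Suc (a + m) then long else short)" for j
  have J: "{a<..Suc (a + m)} = insert (Suc (a + m)) {a<..a + m}" by auto
  have prod_g: "(\<Prod>j\<in>{a<..Suc (a + m)}. g j (x j)) = long (x (Suc (a + m))) * (\<Prod>j\<in>{a<..a + m}. short (x j))"
    for x :: "nat \<Rightarrow> real"
    unfolding J by (simp add: g_def)
  have "ennreal (if cluster_span t eps n a m then exp (- s * (eps + (\<Sum>k\<in>{a<..a + m}. t k))) else 0) =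
      f (restrict t {..a}) * (\<Prod>j\<in>{a<..Suc (a + m)}. g j (t j))" for t
    unfolding cluster_span_weight_eq_prod prod_g
    by (simp add: f_def short_def long_def cluster_start_restrict ennreal_mult prod_ennreal prod_nonneg mult_ac)
  then have "(\<integral>\<^sup>+\<omega>. ennreal (if cluster_span (\<lambda>j. T j \<omega>) eps n a m
                   then exp (- s * (eps + (\<Sum>k\<in>{a<..a + m}. T k \<omega>))) else 0) \<partial>M) =
      (\<integral>\<^sup>+\<omega>. f (restrict (\<lambda>j. T j \<omega>) {..a}) * (\<Prod>j\<in>{a<..Suc (a + m)}. g j (T j \<omega>)) \<partial>M)"
    by simp
  also have "\<dots> = (\<integral>\<^sup>+\<omega>. f (restrict (\<lambda>j. T j \<omega>) {..a}) \<partial>M) *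
      (\<Prod>j\<in>{a<..Suc (a + m)}. \<integral>\<^sup>+\<omega>. g j (T j \<omega>) \<partial>M)"
  proof (rule nn_integral_indep_block_prod[OF indep])
    show "f \<in> borel_measurable (PiM {..a} (\<lambda>_. borel))"
      unfolding f_def using pred_cluster_start_PiM by measurable
    show "g j \<in> borel_measurable borel" for j
      unfolding g_def short_def long_def by (cases "j = Suc (a + m)") simp_all
  qed auto
  also have "(\<integral>\<^sup>+\<omega>. f (restrict (\<lambda>j. T j \<omega>) {..a}) \<partial>M) =
      emeasure M {\<omega>\<in>space M. cluster_start (\<lambda>j. T j \<omega>) eps n a}"
  proof -
    have "(\<integral>\<^sup>+\<omega>. f (restrict (\<lambda>j. T j \<omega>) {..a}) \<partial>M) =
        (\<integral>\<^sup>+\<omega>. indicator {\<omega>\<in>space M. cluster_start (\<lambda>j. T j \<omega>) eps n a} \<omega> \<partial>M)"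
      by (rule nn_integral_cong) (simp add: f_def cluster_start_restrict indicator_def)
    then show ?thesis by simp
  qed
  also have "(\<Prod>j\<in>{a<..Suc (a + m)}. \<integral>\<^sup>+\<omega>. g j (T j \<omega>) \<partial>M) =
      ennreal (exp (- s * eps) * exp (- eps * l)) * ennreal (short_gap_laplace l eps s) ^ m"
    unfolding J
    by (simp add: g_def short_def long_def nn_integral_short_gap[OF assms] nn_integral_long_gap)
  finally show ?thesis
    using short_gap_laplace_bounds[OF l_pos less_imp_le[OF eps_pos] assms]
    by (simp add: ennreal_mult ennreal_power mult_ac)
qed


lemma nn_integral_next_cluster_length:
  assumes "0 \<le> s"
  shows "(\<integral>\<^sup>+\<omega>. indicator (cluster_event (Suc n)) \<omega> *
             ennreal (exp (- s * cluster_length (poisson_points T \<omega>) eps (Suc n))) \<partial>M) =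
    emeasure M (cluster_event n) * ennreal ((l + s) / (l + s * exp ((l + s) * eps)))"
proof -
  let ?q = "short_gap_laplace l eps s" and ?c = "exp (- s * eps) * exp (- eps * l)"
  let ?w = "\<lambda>a m \<omega>. ennreal (if cluster_span (\<lambda>j. T j \<omega>) eps n a m
                   then exp (- s * (eps + (\<Sum>k\<in>{a<..a + m}. T k \<omega>))) else 0)"
  have q: "0 \<le> ?q" "?q < 1" using short_gap_laplace_bounds[OF l_pos less_imp_le[OF eps_pos] assms] by auto
  have "(\<integral>\<^sup>+\<omega>. indicator (cluster_event (Suc n)) \<omega> *
             ennreal (exp (- s * cluster_length (poisson_points T \<omega>) eps (Suc n))) \<partial>M) =
      (\<integral>\<^sup>+\<omega>. (\<Sum>a. \<Sum>m. ?w a m \<omega>) \<partial>M)"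
    by (rule nn_integral_cong)
      (simp add: suminf_cluster_span_weight poisson_points_eq cluster_event_def indicator_def)
  also have "\<dots> = (\<Sum>a. \<Sum>m. \<integral>\<^sup>+\<omega>. ?w a m \<omega> \<partial>M)"
    by (simp add: nn_integral_suminf)
  also have "\<dots> = (\<Sum>a. emeasure M {\<omega>\<in>space M. cluster_start (\<lambda>j. T j \<omega>) eps n a} *
      (\<Sum>m. ennreal (?q ^ m * ?c)))"
    by (simp add: nn_integral_cluster_span[OF assms])
  also have "(\<Sum>m. ennreal (?q ^ m * ?c)) = ennreal ((l + s) / (l + s * exp ((l + s) * eps)))"
    using q short_gap_laplace_geometric_sum[OF l_pos less_imp_le[OF eps_pos] assms]
    by (subst suminf_ennreal2) (auto intro: summable_mult2 summable_geometric)
  finally show ?thesis by (simp add: emeasure_cluster_event_suminf)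
qed

lemma emeasure_cluster_event: "emeasure M (cluster_event n) = 1"
proof (induction n)
  case 0
  have "cluster_event 0 = space M" using cluster_start_0 by (auto simp: cluster_event_def)
  then show ?case by (simp add: emeasure_space_1)
next
  case (Suc n)
  \<comment> \<open>At \<open>s = 0\<close> the integral is the probability that the next cluster exists.\<close>
  from nn_integral_next_cluster_length[of 0 n] show ?case
    using l_pos Suc.IH by simp
qed

lemma expectation_exp_cluster_length:
  assumes "1 \<le> i" and "0 \<le> s"
  shows "expectation (\<lambda>\<omega>. exp (- s * cluster_length (poisson_points T \<omega>) eps i)) =
    (l + s) / (l + s * exp ((l + s) * eps))"
proof -
  obtain n where i: "i = Suc n" using assms(1) by (cases i) auto
  have "AE \<omega> in M. \<omega> \<in> cluster_event (Suc n)"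
    using emeasure_cluster_event[of "Suc n"] by (intro AE_prob_1) (simp add: emeasure_eq_measure)
  then have "(\<integral>\<^sup>+\<omega>. ennreal (exp (- s * cluster_length (poisson_points T \<omega>) eps i)) \<partial>M) =
      (\<integral>\<^sup>+\<omega>. indicator (cluster_event (Suc n)) \<omega> *
             ennreal (exp (- s * cluster_length (poisson_points T \<omega>) eps (Suc n))) \<partial>M)"
    by (intro nn_integral_cong_AE) (auto simp: i)
  also have "\<dots> = ennreal ((l + s) / (l + s * exp ((l + s) * eps)))"
    using nn_integral_next_cluster_length[OF assms(2)] by (simp add: emeasure_cluster_event)
  finally show ?thesis
    using l_pos assms(2) by (simp add: integral_eq_nn_integral add_pos_nonneg)
qed

end

theorem theorem1:
  fixes M :: "'a measure" and T :: "nat \<Rightarrow> 'a \<Rightarrow> real"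
    and l eps s :: real and i :: nat
  assumes "prob_space M"
    and "l > 0" and "eps > 0" and "i \<ge> 1" and "s \<ge> 0"
    and "prob_space.indep_vars M (\<lambda>_. borel) T UNIV"
    and "\<And>n. distributed M lborel (T n) (exponential_density l)"
  shows "prob_space.expectation M
           (\<lambda>\<omega>. exp (- s * cluster_length (poisson_points T \<omega>) eps i))
         = (l + s) / (l + s * exp ((l + s) * eps))"
proof -
  interpret exponential_gaps M T l eps
    using assms by (simp add: exponential_gaps_def exponential_gaps_axioms_def)
  show ?thesis using expectation_exp_cluster_length[OF assms(4,5)] .
qed

end
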